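(* If a depth-proper mttr $M$ is finite-nesting, then $M$ is LSHI, i.e., there is $b\in\mathbb N$ with $H(M(t))\le b\cdot|t|$ for all input trees $t$.
   Context: Trees: for a ranked alphabet $\Sigma$, $T_\Sigma$ is the set of finite ranked ordered trees over $\Sigma$, and $T_\Sigma(A)$ the trees over $\Sigma$ with additional rank-0 symbols from $A$. $X_k=\{x_1,\dots,x_k\}$ are input variables and $Y=\{y_1,y_2,\dots\}$, $Y_m=\{y_1,\dots,y_m\}$ are parameters. A (deterministic bottom-up) tree automaton $(P,\Sigma,h)$ has a finite state set $P$ and maps $h_\sigma:P^k\to P$ for $\sigma\in\Sigma^{(k)}$; $\hat h:T_\Sigma\to P$ is its run and $L_p=\{s\in T_\Sigma\mid \hat h(s)=p\}$. A (total, deterministic) macro tree transducer with look-ahead (mttr) is $M=(Q,P,\Sigma,\Delta,q_0,R,h)$ where $Q$ is a ranked alphabet of states, $\Sigma,\Delta$ are ranked input/output alphabets, $(P,\Sigma,h)$ is a tree automaton (the look-ahead), $q_0\in Q^{(0)}$, and for each $q\in Q^{(m)}$, $\sigma\in\Sigma^{(k)}$, $p_1,\dots,p_k\in P$ there is exactly one rule $\langle q,\sigma(x_1:p_1,\dots,x_k:p_k)\rangle(y_1,\dots,y_m)\to t$ with $t\in T_{\Delta\cup\langle Q,X_k\rangle}(Y_m)$, where $\langle q',x_i\rangle$ has the rank of $q'$. For $q\in Q^{(m)}$ and $s=\sigma(s_1,\dots,s_k)$, $M_q(s)\in T_\Delta(Y_m)$ is obtained from the right-hand side of the rule for $(q,\sigma,\hat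 h(s_1),\dots,\hat h(s_k))$ by replacing (recursively, innermost first) each subtree $\langle q',x_i\rangle(\xi_1,\dots,\xi_n)$ by $M_{q'}(s_i)$ with each $y_j$ replaced by (the result for) $\xi_j$; $M(s)=M_{q_0}(s)$. Extension and reachability: $\hat M$ is the mttr with input alphabet $\Sigma\cup P$ (each $p\in P$ a rank-0 input symbol with $\hat h_p()=p$), output alphabet $\Delta\cup\langle Q,P\rangle$ (where $\langle q,p\rangle$ has the rank of $q$), the rules of $M$ plus the rules $\langle q,p\rangle(y_1,\dots,y_m)\to\langle q,p\rangle(y_1,\dots,y_m)$ for $q\in Q^{(m)}$, $p\in P$. A pair $\langle q,p\rangle$ is reachable if it occurs in $\hat M(s)$ for some $s\in T_\Sigma(P)$. Depth-proper: for $y\in Y$ and $s\in T_\Delta(Y)$, $\lfloor s\rfloor_y$ is obtained from $s$ by replacing every maximal subtree not containing $y$ by a new rank-0 symbol $\$$. $M$ is depth-proper if for every reachable $\langle q,p\rangle$ with $q\in Q^{(m)}$ and every $y\in Y_m$, the set $\{\lfloor M_q(s)\rfloor_y\mid s\in L_p\}$ is infinite. Size and height: $|t|$ is the number of nodes of $t$; the height $H(t)$ is the number of nodes on a longest root-to-leaf path. Nesting: for $t\in T_\Sigma(P)$, the nesting of a root-to-leaf path of $\hat M(t)$ is the number of its nodes labeled by symbols of $\langle Q,P\rangle$. $M$ is finite-nesting if there is $b\in\mathbb N$ such that for every $t\in T_\Sigma(P)$ containing exactly one leaf labeled by a symbol of $P$, every root-to-leaf path of $\hat M(t)$ has nesting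 at most $b$. *)

theory Defs
  imports Main
begin

datatype 'a rtree = Nd 'a "'a rtree list"

fun lbl :: "'a rtree \<Rightarrow> 'a" where "lbl (Nd a ts) = a"

fun labels :: "'a rtree \<Rightarrow> 'a set" where
  "labels (Nd a ts) = insert a (\<Union> (set (map labels ts)))"

fun tsize :: "'a rtree \<Rightarrow> nat" where
  "tsize (Nd a ts) = 1 + sum_list (map tsize ts)"

fun theight :: "'a rtree \<Rightarrow> nat" where
  "theight (Nd a ts) = 1 + fold max (map theight ts) 0"

fun paths :: "'a rtree \<Rightarrow> 'a list set" where
  "paths (Nd a ts) = (if ts = [] then {[a]} else (\<lambda>p. a # p) ` (\<Union> (set (map paths ts))))"

fun count_nodes :: "('a \<Rightarrow> bool) \<Rightarrow> 'a rtree \<Rightarrow> nat" where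
  "count_nodes P (Nd a ts) = (if P a then 1 else 0) + sum_list (map (count_nodes P) ts)"

text \<open>Input labels of the extended input alphabet \<Sigma> \<union> P\<close>
datatype ('s,'p) ilab = In 's | LA 'p

text \<open>Right-hand side labels: output symbols of \<Delta>, calls <q',x_i> (i \<ge> 1), parameters y_j (j \<ge> 1)\<close>
datatype ('q,'d) rlab = Out 'd | Call 'q nat | Par nat

text \<open>Output labels: symbols of \<Delta>, symbols <q,p> of <Q,P>, parameters y_j, and the symbol $\<close>
datatype ('q,'p,'d) olab = ODelta 'd | OState 'q 'p | OPar nat | Dollar

record ('q,'p,'s,'d) mttr =
  states :: "'q set"
  rkQ :: "'q \<Rightarrow> nat"
  lastates :: "'p set"
  inp :: "'s set"
  rkI :: "'s \<Rightarrow> nat"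
  outp :: "'d set"
  rkO :: "'d \<Rightarrow> nat"
  init :: 'q
  rules :: "'q \<Rightarrow> 's \<Rightarrow> 'p list \<Rightarrow> ('q,'d) rlab rtree"
  la :: "'s \<Rightarrow> 'p list \<Rightarrow> 'p"

fun wf_rhs :: "('q,'p,'s,'d) mttr \<Rightarrow> nat \<Rightarrow> nat \<Rightarrow> ('q,'d) rlab rtree \<Rightarrow> bool" where
  "wf_rhs M k m (Nd (Out d) ts) =
     (d \<in> outp M \<and> length ts = rkO M d \<and> (\<forall>t\<in>set ts. wf_rhs M k m t))"
| "wf_rhs M k m (Nd (Call q i) ts) =
     (q \<in> states M \<and> 1 \<le> i \<and> i \<le> k \<and> length ts = rkQ M q \<and> (\<forall>t\<in>set ts. wf_rhs M k m t))"
| "wf_rhs M k m (Nd (Par j) ts) = (1 \<le> j \<and> j \<le> m \<and> ts = [])"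

definition wf_mttr :: "('q,'p,'s,'d) mttr \<Rightarrow> bool" where
  "wf_mttr M \<longleftrightarrow>
     finite (states M) \<and> finite (lastates M) \<and> finite (inp M) \<and> finite (outp M) \<and>
     init M \<in> states M \<and> rkQ M (init M) = 0 \<and>
     (\<forall>\<sigma>\<in>inp M. \<forall>ps. length ps = rkI M \<sigma> \<and> set ps \<subseteq> lastates M \<longrightarrow>
         la M \<sigma> ps \<in> lastates M \<and>
         (\<forall>q\<in>states M. wf_rhs M (rkI M \<sigma>) (rkQ M q) (rules M q \<sigma> ps)))"

text \<open>Input trees: T_\<Sigma> (withP = False) and T_\<Sigma>(P) (withP = True)\<close>
fun in_tree :: "('q,'p,'s,'d) mttr \<Rightarrow> bool \<Rightarrow> ('s,'p) ilab rtree \<Rightarrow> bool" where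
  "in_tree M withP (Nd (In \<sigma>) ts) =
     (\<sigma> \<in> inp M \<and> length ts = rkI M \<sigma> \<and> (\<forall>t\<in>set ts. in_tree M withP t))"
| "in_tree M withP (Nd (LA p) ts) = (withP \<and> p \<in> lastates M \<and> ts = [])"

text \<open>Run of the look-ahead automaton (extended by h_p() = p)\<close>
fun hrun :: "('q,'p,'s,'d) mttr \<Rightarrow> ('s,'p) ilab rtree \<Rightarrow> 'p" where
  "hrun M (Nd (In \<sigma>) ts) = la M \<sigma> (map (hrun M) ts)"
| "hrun M (Nd (LA p) ts) = p"

fun osubst :: "('q,'p,'d) olab rtree list \<Rightarrow> ('q,'p,'d) olab rtree \<Rightarrow> ('q,'p,'d) olab rtree" where
  "osubst args (Nd (OPar j) ts) = args ! (j - 1)"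
| "osubst args (Nd a ts) = Nd a (map (osubst args) ts)"

text \<open>Evaluating a right-hand side, given the results F!(i-1) q' = M_{q'}(s_i)\<close>
fun evrhs :: "('q \<Rightarrow> ('q,'p,'d) olab rtree) list \<Rightarrow> ('q,'d) rlab rtree \<Rightarrow> ('q,'p,'d) olab rtree" where
  "evrhs F (Nd (Out d) ts) = Nd (ODelta d) (map (evrhs F) ts)"
| "evrhs F (Nd (Call q i) ts) = osubst (map (evrhs F) ts) ((F ! (i - 1)) q)"
| "evrhs F (Nd (Par j) ts) = Nd (OPar j) []"

text \<open>Semantics of the extension \<hat>M: Mev M s q = \<hat>M_q(s)\<close>
fun Mev :: "('q,'p,'s,'d) mttr \<Rightarrow> ('s,'p) ilab rtree \<Rightarrow> 'q \<Rightarrow> ('q,'p,'d) olab rtree" where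
  "Mev M (Nd (In \<sigma>) ts) =
     (\<lambda>q. evrhs (map (Mev M) ts) (rules M q \<sigma> (map (hrun M) ts)))"
| "Mev M (Nd (LA p) ts) =
     (\<lambda>q. Nd (OState q p) (map (\<lambda>j. Nd (OPar j) []) [1..<rkQ M q + 1]))"

definition Mq :: "('q,'p,'s,'d) mttr \<Rightarrow> 'q \<Rightarrow> ('s,'p) ilab rtree \<Rightarrow> ('q,'p,'d) olab rtree" where
  "Mq M q s = Mev M s q"

text \<open>M(s) = M_{q0}(s); on T_\<Sigma>(P) this is \<hat>M(s)\<close>
definition Mout :: "('q,'p,'s,'d) mttr \<Rightarrow> ('s,'p) ilab rtree \<Rightarrow> ('q,'p,'d) olab rtree" where
  "Mout M s = Mq M (init M) s"

definition Lp :: "('q,'p,'s,'d) mttr \<Rightarrow> 'p \<Rightarrow> ('s,'p) ilab rtree set" where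
  "Lp M p = {s. in_tree M False s \<and> hrun M s = p}"

definition reachable :: "('q,'p,'s,'d) mttr \<Rightarrow> 'q \<Rightarrow> 'p \<Rightarrow> bool" where
  "reachable M q p \<longleftrightarrow> (\<exists>s. in_tree M True s \<and> OState q p \<in> labels (Mout M s))"

fun cut :: "nat \<Rightarrow> ('q,'p,'d) olab rtree \<Rightarrow> ('q,'p,'d) olab rtree" where
  "cut j (Nd a ts) = (if OPar j \<in> labels (Nd a ts) then Nd a (map (cut j) ts) else Nd Dollar [])"

definition depth_proper :: "('q,'p,'s,'d) mttr \<Rightarrow> bool" where
  "depth_proper M \<longleftrightarrow>
     (\<forall>q\<in>states M. \<forall>p\<in>lastates M. reachable M q p \<longrightarrow>
        (\<forall>j\<in>{1..rkQ M q}. infinite {cut j (Mq M q s) | s. s \<in> Lp M p}))"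

fun is_state_lab :: "('q,'p,'d) olab \<Rightarrow> bool" where
  "is_state_lab (OState q p) = True"
| "is_state_lab _ = False"

fun is_LA :: "('s,'p) ilab \<Rightarrow> bool" where
  "is_LA (LA p) = True"
| "is_LA _ = False"

definition nesting :: "('q,'p,'d) olab list \<Rightarrow> nat" where
  "nesting \<pi> = length (filter is_state_lab \<pi>)"

definition finite_nesting :: "('q,'p,'s,'d) mttr \<Rightarrow> bool" where
  "finite_nesting M \<longleftrightarrow>
     (\<exists>b::nat. \<forall>t. in_tree M True t \<and> count_nodes is_LA t = 1 \<longrightarrow>
        (\<forall>\<pi>\<in>paths (Mout M t). nesting \<pi> \<le> b))"

definition LSHI :: "('q,'p,'s,'d) mttr \<Rightarrow> bool" where
  "LSHI M \<longleftrightarrow> (\<exists>b::nat. \<forall>t. in_tree M False t \<longrightarrow> theight (Mout M t) \<le> b * tsize t)"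

end

theory Submission imports Defs begin

text \<open>
  Tag every output symbol with the input position whose rule produced it. For a position u of
  an input t, let p be the look-ahead state of the subtree t/u and let t' be t with t/u replaced
  by the leaf p. Then M(t) arises from \<open>\<hat>M(t')\<close> by substituting \<open>M\<^sub>q(t/u)\<close> for every
  symbol \<open>\<langle>q,p\<rangle>\<close>. In \<open>M\<^sub>q(t/u)\<close> all symbols tagged u come from one right-hand side, so a path
  meets at most R of them, R the maximal height of a right-hand side; and a path of M(t) runs
  through at most b substituted copies, b the nesting bound for t'. So each of the |t| positions
  contributes at most R b nodes to a path of M(t), and \<open>H(M(t)) \<le> R b |t|\<close>.
\<close>

lemma paths_nonempty: "paths t \<noteq> {}"
  by (induction t) (auto simp: neq_Nil_conv)

lemma set_path_subset_labels: "\<pi> \<in> paths t \<Longrightarrow> set \<pi> \<subseteq> labels t"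
  by (induction t arbitrary: \<pi>) (fastforce split: if_splits)

lemma paths_map_rtree: "paths (map_rtree f t) = map f ` paths t"
  by (induction t) (auto simp: image_UN image_image)

lemma Cons_in_paths_Nd: "t \<in> set ts \<Longrightarrow> \<pi> \<in> paths t \<Longrightarrow> a # \<pi> \<in> paths (Nd a ts)"
  by (cases ts) auto

lemma paths_Nd_Cons: "\<pi> \<in> paths (Nd a ts) \<Longrightarrow> \<exists>\<pi>'. \<pi> = a # \<pi>'"
  by (auto split: if_splits)

lemma mem_set_list_update:
  "c \<in> set (xs[i := y]) \<Longrightarrow> c = y \<or> (\<exists>j<length xs. j \<noteq> i \<and> c = xs ! j)"
proof -
  assume "c \<in> set (xs[i := y])"
  then obtain j where "j < length xs" "c = xs[i := y] ! j" by (auto simp: in_set_conv_nth)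
  then show ?thesis by (cases "j = i") auto
qed

lemma fold_max_le_iff: "fold max xs a \<le> (n::nat) \<longleftrightarrow> a \<le> n \<and> (\<forall>x\<in>set xs. x \<le> n)"
  by (induction xs arbitrary: a) auto

lemma theight_Nd_le_Suc_iff: "theight (Nd a ts) \<le> Suc n \<longleftrightarrow> (\<forall>t\<in>set ts. theight t \<le> n)"
  by (simp add: fold_max_le_iff)

lemma theight_child_less: "t \<in> set ts \<Longrightarrow> theight t < theight (Nd a ts)"
  using theight_Nd_le_Suc_iff[of a ts "theight (Nd a ts) - 1"] by fastforce

lemma theight_map_rtree: "theight (map_rtree f t) = theight t"
  by (induction t) (simp, metis (no_types, lifting) comp_apply map_eq_conv map_map)

lemma theight_le_if_paths_le: "(\<And>\<pi>. \<pi> \<in> paths t \<Longrightarrow> length \<pi> \<le> n) \<Longrightarrow> theight t \<le> n"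
proof (induction t arbitrary: n)
  case (Nd a ts)
  show ?case
  proof (cases "ts = []")
    case True
    then show ?thesis using Nd.prems by simp
  next
    case False
    have child: "length \<pi> < n" if "t \<in> set ts" "\<pi> \<in> paths t" for t \<pi>
      using Nd.prems[of "a # \<pi>"] that False by force
    have "\<forall>t\<in>set ts. theight t \<le> n - 1"
    proof
      fix t assume "t \<in> set ts"
      then show "theight t \<le> n - 1"
        using child by (intro Nd.IH) fastforce+
    qed
    moreover obtain t \<pi> where "t \<in> set ts" "\<pi> \<in> paths t"
      using False paths_nonempty by (metis ex_in_conv last_in_set)
    ultimately show ?thesis
      using child theight_Nd_le_Suc_iff[of a ts "n - 1"] by fastforce
  qed
qed

text \<open>The invariant of the values \<open>\<hat>M\<^sub>q(s)\<close> for q of rank m.\<close>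
fun wf_otree :: "'q set \<Rightarrow> ('q \<Rightarrow> nat) \<Rightarrow> nat \<Rightarrow> ('q,'p,'d) olab rtree \<Rightarrow> bool" where
  "wf_otree S rk m (Nd (OPar j) ts) = (1 \<le> j \<and> j \<le> m \<and> ts = [])"
| "wf_otree S rk m (Nd (OState q p) ts) = (q \<in> S \<and> length ts = rk q \<and> (\<forall>t\<in>set ts. wf_otree S rk m t))"
| "wf_otree S rk m (Nd (ODelta d) ts) = (\<forall>t\<in>set ts. wf_otree S rk m t)"
| "wf_otree S rk m (Nd Dollar ts) = False"

lemma wf_otree_child: "wf_otree S rk m (Nd a ts) \<Longrightarrow> t \<in> set ts \<Longrightarrow> wf_otree S rk m t"
  by (cases a) auto

lemma wf_otree_labels:
  "wf_otree S rk m t \<Longrightarrow> a \<in> labels t \<Longrightarrow> a \<noteq> Dollar \<and> (\<forall>j. a = OPar j \<longrightarrow> 1 \<le> j \<and> j \<le> m)"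
proof (induction t)
  case (Nd b ts) then show ?case by (cases b) auto
qed

lemma wf_otree_osubst:
  "wf_otree S rk n t \<Longrightarrow> length args = n \<Longrightarrow> \<forall>s\<in>set args. wf_otree S rk m s \<Longrightarrow>
   wf_otree S rk m (osubst args t)"
proof (induction t)
  case (Nd a ts) then show ?case by (cases a) auto
qed

lemma osubst_osubst:
  "wf_otree S rk n t \<Longrightarrow> length args = n \<Longrightarrow>
   osubst args' (osubst args t) = osubst (map (osubst args') args) t"
proof (induction t)
  case (Nd a ts) then show ?case by (cases a) (auto dest: wf_otree_child)
qed

lemma osubst_params:
  "wf_otree S rk m t \<Longrightarrow> osubst (map (\<lambda>j. Nd (OPar j) []) [1..<m+1]) t = t"
proof (induction t)
  case (Nd a ts) then show ?case by (cases a) (auto simp del: upt_Suc simp: map_idI)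
qed

lemma osubst_map_rtree:
  "wf_otree S rk n t \<Longrightarrow> length args = n \<Longrightarrow>
   map_rtree (map_olab (\<lambda>q. q) (\<lambda>p. p) f) (osubst args t) =
     osubst (map (map_rtree (map_olab (\<lambda>q. q) (\<lambda>p. p) f)) args) (map_rtree (map_olab (\<lambda>q. q) (\<lambda>p. p) f) t)"
proof (induction t)
  case (Nd a ts) then show ?case by (cases a) auto
qed

lemma labels_osubst:
  "wf_otree S rk n t \<Longrightarrow> length args = n \<Longrightarrow>
   labels (osubst args t) \<subseteq> labels t \<union> \<Union> (labels ` set args)"
proof (induction t)
  case (Nd a ts)
  then have "\<forall>t\<in>set ts. labels (osubst args t) \<subseteq> labels t \<union> \<Union> (labels ` set args)"
    by (cases a) auto
  then show ?case using Nd.prems by (cases a) fastforce+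
qed

lemma paths_osubst:
  assumes "wf_otree S rk n t" "length args = n" "\<pi> \<in> paths (osubst args t)"
  shows "\<pi> \<in> paths t \<or>
    (\<exists>\<rho> j \<sigma>. \<rho> @ [OPar j] \<in> paths t \<and> 1 \<le> j \<and> j \<le> n \<and> \<sigma> \<in> paths (args ! (j - 1)) \<and> \<pi> = \<rho> @ \<sigma>)"
  using assms
proof (induction t arbitrary: \<pi>)
  case (Nd a ts)
  show ?case
  proof (cases "\<exists>j. a = OPar j")
    case True
    then show ?thesis using Nd.prems by (intro disjI2 exI[of _ "[]"]) auto
  next
    case False
    hence os: "osubst args (Nd a ts) = Nd a (map (osubst args) ts)" by (cases a) auto
    show ?thesis
    proof (cases "ts = []")
      case True then show ?thesis using Nd.prems os by simp
    next
      case False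
      from Nd.prems(3) False obtain t \<pi>' where
        t: "t \<in> set ts" "\<pi>' \<in> paths (osubst args t)" "\<pi> = a # \<pi>'"
        by (auto simp: os)
      from Nd.IH[OF t(1) wf_otree_child[OF Nd.prems(1) t(1)] Nd.prems(2) t(2)]
      show ?thesis
      proof (elim disjE exE conjE)
        assume "\<pi>' \<in> paths t"
        then show ?thesis using t False by auto
      next
        fix \<rho> j \<sigma>
        assume "\<rho> @ [OPar j] \<in> paths t" "1 \<le> j" "j \<le> n" "\<sigma> \<in> paths (args ! (j - 1))" "\<pi>' = \<rho> @ \<sigma>"
        then show ?thesis using t False by (intro disjI2 exI[of _ "a # \<rho>"]) auto
      qed
    qed
  qed
qed

abbreviation wf_out :: "('q,'p,'s,'d) mttr \<Rightarrow> nat \<Rightarrow> ('q,'p','d') olab rtree \<Rightarrow> bool" where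
  "wf_out M \<equiv> wf_otree (states M) (rkQ M)"

text \<open>The part of \<^const>\<open>wf_mttr\<close> that the semantics needs; unlike the finiteness conditions
  it is inherited by the position-tagged transducer below.\<close>
definition wf_rules :: "('q,'p,'s,'d) mttr \<Rightarrow> bool" where
  "wf_rules M \<longleftrightarrow> (\<forall>\<sigma>\<in>inp M. \<forall>ps. length ps = rkI M \<sigma> \<and> set ps \<subseteq> lastates M \<longrightarrow>
     la M \<sigma> ps \<in> lastates M \<and> (\<forall>q\<in>states M. wf_rhs M (rkI M \<sigma>) (rkQ M q) (rules M q \<sigma> ps)))"

lemma wf_mttr_imp_wf_rules: "wf_mttr M \<Longrightarrow> wf_rules M"
  unfolding wf_mttr_def wf_rules_def by blast

lemma in_tree_with_LA: "in_tree M w s \<Longrightarrow> in_tree M True s"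
proof (induction s)
  case (Nd a ts) then show ?case by (cases a) auto
qed

lemma hrun_in_lastates: "wf_rules M \<Longrightarrow> in_tree M w s \<Longrightarrow> hrun M s \<in> lastates M"
proof (induction s)
  case (Nd a ts)
  show ?case
  proof (cases a)
    case (In \<sigma>)
    have "set (map (hrun M) ts) \<subseteq> lastates M" using Nd In by auto
    then show ?thesis using Nd.prems In unfolding wf_rules_def by auto
  qed (use Nd in auto)
qed

lemma wf_rhs_rule:
  "wf_rules M \<Longrightarrow> in_tree M w (Nd (In \<sigma>) ts) \<Longrightarrow> q \<in> states M \<Longrightarrow>
   wf_rhs M (length ts) (rkQ M q) (rules M q \<sigma> (map (hrun M) ts))"
proof -
  assume wf: "wf_rules M" and s: "in_tree M w (Nd (In \<sigma>) ts)" and q: "q \<in> states M"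
  have "set (map (hrun M) ts) \<subseteq> lastates M" using s hrun_in_lastates[OF wf] by auto
  then show ?thesis using wf s q unfolding wf_rules_def by auto
qed

lemma wf_out_evrhs:
  "wf_rhs M k m r \<Longrightarrow> length F = k \<Longrightarrow>
   \<forall>i<k. \<forall>q\<in>states M. wf_out M (rkQ M q) ((F ! i) q) \<Longrightarrow>
   wf_out M m (evrhs F r)"
proof (induction r)
  case (Nd a ts)
  then show ?case
    by (cases a) (auto intro!: wf_otree_osubst)
qed

lemma wf_out_Mev: "wf_rules M \<Longrightarrow> in_tree M True s \<Longrightarrow> q \<in> states M \<Longrightarrow>
  wf_out M (rkQ M q) (Mev M s q)"
proof (induction s arbitrary: q)
  case (Nd a ts)
  show ?case
  proof (cases a)
    case (In \<sigma>)
    then show ?thesis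
      using Nd wf_rhs_rule[OF Nd.prems(1,2)[unfolded In]] by (auto intro!: wf_out_evrhs)
  qed (use Nd in auto)
qed

lemma labels_evrhs:
  assumes "wf_rhs M k m r" "length F = k" "\<forall>i<k. \<forall>q\<in>states M. wf_out M (rkQ M q) ((F ! i) q)"
    and "a \<in> labels (evrhs F r)"
  shows "(\<exists>d. Out d \<in> labels r \<and> a = ODelta d) \<or> (\<exists>j. a = OPar j) \<or>
    (\<exists>i<k. \<exists>q\<in>states M. a \<in> labels ((F ! i) q))"
  using assms
proof (induction r)
  case (Nd b ts)
  show ?case
  proof (cases b)
    case (Call q i)
    have "wf_out M (rkQ M q) ((F ! (i - 1)) q)" using Nd.prems Call by auto
    from labels_osubst[OF this, of "map (evrhs F) ts"]
    have "a \<in> labels ((F ! (i - 1)) q) \<or> (\<exists>t\<in>set ts. a \<in> labels (evrhs F t))"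
      using Nd.prems Call by auto
    then show ?thesis
    proof
      assume "a \<in> labels ((F ! (i - 1)) q)"
      then show ?thesis using Nd.prems Call by (intro disjI2) (rule exI[of _ "i - 1"], auto)
    next
      assume "\<exists>t\<in>set ts. a \<in> labels (evrhs F t)"
      then show ?thesis using Nd Call by fastforce
    qed
  qed (use Nd in fastforce)+
qed

lemma Mev_no_state_labels: "wf_rules M \<Longrightarrow> in_tree M False s \<Longrightarrow> q \<in> states M \<Longrightarrow>
  a \<in> labels (Mev M s q) \<Longrightarrow> \<not> is_state_lab a"
proof (induction s arbitrary: q a)
  case (Nd b ts)
  then obtain \<sigma> where b: "b = In \<sigma>" by (cases b) auto
  have "\<forall>i<length ts. \<forall>q\<in>states M. wf_out M (rkQ M q) ((map (Mev M) ts ! i) q)"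
    using Nd.prems b wf_out_Mev in_tree_with_LA by fastforce
  then have "(\<exists>d. a = ODelta d) \<or> (\<exists>j. a = OPar j) \<or>
      (\<exists>i<length ts. \<exists>q\<in>states M. a \<in> labels (Mev M (ts ! i) q))"
    using labels_evrhs[OF wf_rhs_rule[OF Nd.prems(1,2)[unfolded b] Nd.prems(3)], of "map (Mev M) ts" a]
      Nd.prems b by auto
  moreover have "\<not> is_state_lab a" if "i < length ts" "q' \<in> states M" "a \<in> labels (Mev M (ts ! i) q')"
    for i q'
    using that Nd.IH[of "ts ! i" q' a] Nd.prems b by auto
  ultimately show ?case by auto
qed

primrec is_pos :: "nat list \<Rightarrow> 'a rtree \<Rightarrow> bool" where
  "is_pos [] t = True"
| "is_pos (i # u) t = (case t of Nd a ts \<Rightarrow> i < length ts \<and> is_pos u (ts ! i))"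

primrec subtree_at :: "nat list \<Rightarrow> 'a rtree \<Rightarrow> 'a rtree" where
  "subtree_at [] t = t"
| "subtree_at (i # u) t = (case t of Nd a ts \<Rightarrow> subtree_at u (ts ! i))"

primrec replace_at :: "nat list \<Rightarrow> 'a rtree \<Rightarrow> 'a rtree \<Rightarrow> 'a rtree" where
  "replace_at [] t s = s"
| "replace_at (i # u) t s = (case t of Nd a ts \<Rightarrow> Nd a (ts[i := replace_at u (ts ! i) s]))"

definition positions :: "'a rtree \<Rightarrow> nat list set" where
  "positions t = {u. is_pos u t}"

lemma positions_Nd:
  "positions (Nd a ts) = insert [] (\<Union>i<length ts. Cons i ` positions (ts ! i))"
proof -
  have "is_pos u (Nd a ts) \<longleftrightarrow> u = [] \<or> (\<exists>i<length ts. \<exists>v. u = i # v \<and> is_pos v (ts ! i))" for u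
    by (cases u) auto
  then show ?thesis unfolding positions_def by auto
qed

lemma finite_positions: "finite (positions t)"
  by (induction t) (auto simp: positions_Nd)

lemma card_positions_le_tsize: "card (positions t) \<le> tsize t"
proof (induction t)
  case (Nd a ts)
  have "card (\<Union>i<length ts. Cons i ` positions (ts ! i)) \<le> (\<Sum>i<length ts. card (Cons i ` positions (ts ! i)))"
    by (rule card_UN_le) simp
  also have "\<dots> \<le> (\<Sum>i<length ts. tsize (ts ! i))"
    using Nd.IH by (intro sum_mono) (simp add: card_image)
  also have "\<dots> = sum_list (map tsize ts)"
    by (simp add: sum_list_sum_nth atLeast0LessThan)
  finally show ?case
    using card_insert_le_m1[of _ "\<Union>i<length ts. Cons i ` positions (ts ! i)" "[]"]
    by (simp add: positions_Nd card_insert_if finite_positions)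
qed

lemma in_tree_subtree_at: "in_tree M w t \<Longrightarrow> is_pos u t \<Longrightarrow> in_tree M w (subtree_at u t)"
proof (induction u arbitrary: t)
  case (Cons i u)
  obtain a ts where t: "t = Nd a ts" by (cases t)
  then show ?case using Cons by (cases a) auto
qed simp

lemma in_tree_replace_at:
  "in_tree M w t \<Longrightarrow> is_pos u t \<Longrightarrow> in_tree M w s \<Longrightarrow> in_tree M w (replace_at u t s)"
proof (induction u arbitrary: t)
  case (Cons i u)
  obtain a ts where t: "t = Nd a ts" by (cases t)
  then show ?case
    using Cons by (cases a) (auto dest!: set_update_subset_insert[THEN subsetD])
qed simp

lemma hrun_replace_at_hrun:
  "is_pos u t \<Longrightarrow> hrun M (replace_at u t (Nd (LA (hrun M (subtree_at u t))) [])) = hrun M t"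
proof (induction u arbitrary: t)
  case (Cons i u)
  obtain a ts where t: "t = Nd a ts" by (cases t)
  show ?case
  proof (cases a)
    case (In \<sigma>)
    have "map (hrun M) (ts[i := replace_at u (ts ! i) (Nd (LA (hrun M (subtree_at u (ts ! i)))) [])]) =
        map (hrun M) ts"
      using Cons t by (simp add: map_update) (metis list_update_id nth_map)
    then show ?thesis using t In by simp
  qed (use t in simp)
qed simp

lemma map_rtree_replace_at:
  "is_pos u t \<Longrightarrow> map_rtree f (replace_at u t s) = replace_at u (map_rtree f t) (map_rtree f s)"
proof (induction u arbitrary: t)
  case (Cons i u) then show ?case by (cases t) (auto simp: map_update)
qed simp

lemma count_LA_eq_0: "in_tree M False t \<Longrightarrow> count_nodes is_LA t = 0"
proof (induction t)
  case (Nd a ts) then show ?case by (cases a) auto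
qed

lemma count_LA_replace_at:
  "in_tree M False t \<Longrightarrow> is_pos u t \<Longrightarrow> count_nodes is_LA (replace_at u t s) = count_nodes is_LA s"
proof (induction u arbitrary: t)
  case (Cons i u)
  obtain a ts where t: "t = Nd a ts" by (cases t)
  with Cons.prems obtain \<sigma> where a: "a = In \<sigma>" by (cases a) auto
  have "sum_list (map (count_nodes is_LA) ts) = 0"
    using Cons.prems t a count_LA_eq_0 by (auto simp: sum_list_eq_0_iff)
  moreover have "count_nodes is_LA (replace_at u (ts ! i) s) = count_nodes is_LA s"
    using Cons t a by (intro Cons.IH) auto
  ultimately show ?case
    using Cons.prems t a by (simp add: map_update sum_list_update)
qed simp

section \<open>Decomposition at a position\<close>

fun subst_states :: "('q \<Rightarrow> ('q,'p,'d) olab rtree) \<Rightarrow> ('q,'p,'d) olab rtree \<Rightarrow> ('q,'p,'d) olab rtree" where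
  "subst_states I (Nd (OState q p) ts) = osubst (map (subst_states I) ts) (I q)"
| "subst_states I (Nd (ODelta d) ts) = Nd (ODelta d) (map (subst_states I) ts)"
| "subst_states I (Nd (OPar j) ts) = Nd (OPar j) (map (subst_states I) ts)"
| "subst_states I (Nd Dollar ts) = Nd Dollar (map (subst_states I) ts)"

lemma subst_states_no_states: "\<forall>a\<in>labels t. \<not> is_state_lab a \<Longrightarrow> subst_states I t = t"
proof (induction t)
  case (Nd a ts) then show ?case by (cases a) (auto intro: map_idI)
qed

lemma subst_states_osubst:
  assumes "wf_otree S rk n t" "length args = n" "\<forall>q\<in>S. wf_otree S rk (rk q) (I q)"
  shows "subst_states I (osubst args t) = osubst (map (subst_states I) args) (subst_states I t)"
  using assms
proof (induction t)
  case (Nd a ts)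
  show ?case
  proof (cases a)
    case (OState q p)
    have "osubst (map (subst_states I) args) (osubst (map (subst_states I) ts) (I q)) =
        osubst (map (osubst (map (subst_states I) args)) (map (subst_states I) ts)) (I q)"
      using Nd.prems OState by (intro osubst_osubst[where n = "rk q"]) auto
    moreover have "subst_states I (osubst args t) = osubst (map (subst_states I) args) (subst_states I t)"
      if "t \<in> set ts" for t
      using Nd OState that by (auto dest: wf_otree_child)
    ultimately show ?thesis using OState by (simp cong: map_cong)
  qed (use Nd in auto)
qed

lemma subst_states_evrhs:
  assumes "wf_rhs M k m r" "length F = k" "length F' = k"
    and "\<forall>i<k. \<forall>q\<in>states M. wf_out M (rkQ M q) ((F' ! i) q) \<and> subst_states I ((F' ! i) q) = (F ! i) q"
    and "\<forall>q\<in>states M. wf_out M (rkQ M q) (I q)"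
  shows "subst_states I (evrhs F' r) = evrhs F r"
  using assms
proof (induction r)
  case (Nd a ts)
  show ?case
  proof (cases a)
    case (Call q i)
    have wf: "wf_out M (rkQ M q) ((F' ! (i - 1)) q)" using Nd.prems Call by auto
    have "subst_states I (osubst (map (evrhs F') ts) ((F' ! (i - 1)) q)) =
        osubst (map (subst_states I) (map (evrhs F') ts)) (subst_states I ((F' ! (i - 1)) q))"
      by (rule subst_states_osubst[OF wf]) (use Nd.prems Call in auto)
    then have "subst_states I (evrhs F' (Nd a ts)) =
        osubst (map (subst_states I) (map (evrhs F') ts)) (subst_states I ((F' ! (i - 1)) q))"
      using Call by simp
    also have "map (subst_states I) (map (evrhs F') ts) = map (evrhs F) ts"
      using Nd Call by auto
    also have "subst_states I ((F' ! (i - 1)) q) = (F ! (i - 1)) q" using Nd.prems Call by auto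
    finally show ?thesis using Call by simp
  qed (use Nd in auto)
qed

lemma subst_states_Mev_LA:
  assumes "wf_rules M" "in_tree M True t" "q \<in> states M"
  shows "subst_states (Mev M t) (Mev M (Nd (LA p) []) q) = Mev M t q"
proof -
  let ?ys = "map (\<lambda>j. Nd (OPar j) []) [1..<rkQ M q + 1]"
  have "map (subst_states (Mev M t)) ?ys = ?ys" by (simp del: upt_Suc)
  then have "subst_states (Mev M t) (Mev M (Nd (LA p) []) q) = osubst ?ys (Mev M t q)"
    by (simp del: upt_Suc map_map)
  also have "\<dots> = Mev M t q" using wf_out_Mev[OF assms] by (rule osubst_params)
  finally show ?thesis .
qed

lemma subst_states_Mev_state_free:
  assumes "wf_rules M" "in_tree M False s" "q \<in> states M"
  shows "subst_states I (Mev M s q) = Mev M s q"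
  using Mev_no_state_labels[OF assms] by (intro subst_states_no_states) blast

lemma Mev_decompose:
  fixes M :: "('q,'p,'s,'d) mttr"
  assumes "wf_rules M" "is_pos u t" "in_tree M False t" "q \<in> states M"
  shows "Mev M t q = subst_states (Mev M (subtree_at u t))
    (Mev M (replace_at u t (Nd (LA (hrun M (subtree_at u t))) [])) q)"
  using assms(2-4)
proof (induction u arbitrary: t q)
  case Nil
  then show ?case using subst_states_Mev_LA[OF assms(1) in_tree_with_LA] by simp
next
  case (Cons i u)
  obtain a ts where t: "t = Nd a ts" by (cases t)
  with Cons.prems obtain \<sigma> where a: "a = In \<sigma>" by (cases a) auto
  define x :: "('s,'p) ilab rtree" where "x = Nd (LA (hrun M (subtree_at u (ts ! i)))) []"
  define ts' where "ts' = ts[i := replace_at u (ts ! i) x]"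
  have i: "i < length ts" and u: "is_pos u (ts ! i)" and ti: "in_tree M False (ts ! i)"
    using Cons.prems t a by auto
  have hrun_ts': "map (hrun M) ts' = map (hrun M) ts"
    using hrun_replace_at_hrun[OF u, of M] i
    by (simp add: ts'_def x_def map_update) (metis list_update_id nth_map)
  have "in_tree M True x"
    using hrun_in_lastates[OF assms(1) in_tree_subtree_at[OF ti u]] by (simp add: x_def)
  then have ts'_in: "\<forall>s\<in>set ts'. in_tree M True s"
    using in_tree_replace_at[OF in_tree_with_LA[OF ti] u] Cons.prems t a
    by (auto simp: ts'_def intro: in_tree_with_LA dest!: set_update_subset_insert[THEN subsetD])
  have sub: "\<forall>j<length ts. \<forall>q\<in>states M. wf_out M (rkQ M q) ((map (Mev M) ts' ! j) q) \<and>
      subst_states (Mev M (subtree_at u (ts ! i))) ((map (Mev M) ts' ! j) q) = (map (Mev M) ts ! j) q"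
  proof (intro allI impI ballI conjI)
    fix j q assume j: "j < length ts" and q: "q \<in> states M"
    then show "wf_out M (rkQ M q) ((map (Mev M) ts' ! j) q)"
      using wf_out_Mev[OF assms(1) _ q] ts'_in by (simp add: ts'_def)
    show "subst_states (Mev M (subtree_at u (ts ! i))) ((map (Mev M) ts' ! j) q) = (map (Mev M) ts ! j) q"
    proof (cases "j = i")
      case True
      then show ?thesis using Cons.IH[OF u ti q] i by (simp add: ts'_def x_def)
    next
      case False
      have "in_tree M False (ts ! j)" using Cons.prems t a j by auto
      then show ?thesis using False j subst_states_Mev_state_free[OF assms(1) _ q] by (simp add: ts'_def)
    qed
  qed
  have "\<forall>q\<in>states M. wf_out M (rkQ M q) (Mev M (subtree_at u (ts ! i)) q)"
    using wf_out_Mev[OF assms(1) in_tree_with_LA[OF in_tree_subtree_at[OF ti u]]] by blast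
  from subst_states_evrhs[OF wf_rhs_rule[OF assms(1) Cons.prems(2)[unfolded t a] Cons.prems(3)]
      _ _ sub this]
  have "subst_states (Mev M (subtree_at u (ts ! i))) (Mev M (Nd (In \<sigma>) ts') q) = Mev M t q"
    using hrun_ts' t a by (simp add: ts'_def)
  then show ?case using t a by (simp add: ts'_def x_def)
qed

section \<open>Tagging output symbols with input positions\<close>

fun tag_ilab :: "nat list \<Rightarrow> ('s,'p) ilab \<Rightarrow> ('s \<times> nat list,'p) ilab" where
  "tag_ilab v (In \<sigma>) = In (\<sigma>, v)"
| "tag_ilab v (LA p) = LA p"

function annotate :: "nat list \<Rightarrow> ('s,'p) ilab rtree \<Rightarrow> ('s \<times> nat list,'p) ilab rtree" where
  "annotate v (Nd a ts) = Nd (tag_ilab v a) (map (\<lambda>i. annotate (v @ [i]) (ts ! i)) [0..<length ts])"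
  by pat_completeness auto
termination
  by (relation "measure (\<lambda>(v,t). size t)")
    (auto intro!: le_imp_less_Suc size_list_estimation'[OF nth_mem])

definition tag_rhs :: "nat list \<Rightarrow> ('q,'d) rlab rtree \<Rightarrow> ('q,'d \<times> nat list) rlab rtree" where
  "tag_rhs v r = map_rtree (map_rlab id (\<lambda>d. (d, v))) r"

definition tagged_mttr :: "('q,'p,'s,'d) mttr \<Rightarrow> ('q,'p,'s \<times> nat list,'d \<times> nat list) mttr" where
  "tagged_mttr M = \<lparr>states = states M, rkQ = rkQ M, lastates = lastates M, inp = {x. fst x \<in> inp M},
     rkI = \<lambda>x. rkI M (fst x), outp = {x. fst x \<in> outp M}, rkO = \<lambda>x. rkO M (fst x),
     init = init M, rules = \<lambda>q x ps. tag_rhs (snd x) (rules M q (fst x) ps), la = \<lambda>x ps. la M (fst x) ps\<rparr>"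

lemma tagged_mttr_simps [simp]:
  "states (tagged_mttr M) = states M" "rkQ (tagged_mttr M) = rkQ M"
  "lastates (tagged_mttr M) = lastates M" "inp (tagged_mttr M) = {x. fst x \<in> inp M}"
  "rkI (tagged_mttr M) = (\<lambda>x. rkI M (fst x))" "outp (tagged_mttr M) = {x. fst x \<in> outp M}"
  "rkO (tagged_mttr M) = (\<lambda>x. rkO M (fst x))" "init (tagged_mttr M) = init M"
  "rules (tagged_mttr M) q x ps = tag_rhs (snd x) (rules M q (fst x) ps)"
  "la (tagged_mttr M) x ps = la M (fst x) ps"
  by (simp_all add: tagged_mttr_def)

lemma tag_rhs_Nd: "tag_rhs v (Nd a ts) = Nd (map_rlab id (\<lambda>d. (d, v)) a) (map (tag_rhs v) ts)"
  by (simp add: tag_rhs_def)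

lemma theight_tag_rhs: "theight (tag_rhs v r) = theight r"
  by (simp add: tag_rhs_def theight_map_rtree)

lemma Out_labels_tag_rhs: "Out d \<in> labels (tag_rhs v r) \<Longrightarrow> snd d = v"
proof (induction r)
  case (Nd a ts) then show ?case by (cases a) (auto simp: tag_rhs_Nd)
qed

lemma wf_rhs_tag_rhs: "wf_rhs M k m r \<Longrightarrow> wf_rhs (tagged_mttr M) k m (tag_rhs v r)"
proof (induction r)
  case (Nd a ts) then show ?case by (cases a) (auto simp: tag_rhs_def)
qed

lemma wf_rules_tagged_mttr: "wf_rules M \<Longrightarrow> wf_rules (tagged_mttr M)"
  unfolding wf_rules_def by (auto intro: wf_rhs_tag_rhs)

lemma in_tree_annotate: "in_tree M w t \<Longrightarrow> in_tree (tagged_mttr M) w (annotate v t)"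
proof (induction v t rule: annotate.induct)
  case (1 v a ts) then show ?case by (cases a) auto
qed

lemma is_pos_annotate: "is_pos u (annotate v t) = is_pos u t"
proof (induction u arbitrary: v t)
  case (Cons i u) then show ?case by (cases t) auto
qed simp

lemma subtree_at_annotate: "is_pos u t \<Longrightarrow> subtree_at u (annotate v t) = annotate (v @ u) (subtree_at u t)"
proof (induction u arbitrary: v t)
  case (Cons i u) then show ?case by (cases t) auto
qed simp

lemma tags_annotate: "In x \<in> labels (annotate v t) \<Longrightarrow> \<exists>z. snd x = v @ z \<and> is_pos z t"
proof (induction v t rule: annotate.induct)
  case (1 v a ts)
  show ?case
  proof (cases "In x = tag_ilab v a")
    case True then show ?thesis by (cases a) auto
  next
    case False
    then obtain i where i: "i < length ts" "In x \<in> labels (annotate (v @ [i]) (ts ! i))"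
      using "1.prems" by auto
    then obtain z where "snd x = (v @ [i]) @ z" "is_pos z (ts ! i)" using "1.IH" by auto
    then show ?thesis using i by (intro exI[of _ "i # z"]) auto
  qed
qed

text \<open>Cutting out the subtree at u removes the only node tagged with u.\<close>
lemma tags_replace_at_annotate:
  "is_pos u t \<Longrightarrow> In x \<in> labels (replace_at u (annotate v t) (Nd (LA p) [])) \<Longrightarrow> snd x \<noteq> v @ u"
proof (induction u arbitrary: v t)
  case (Cons i u)
  obtain a ts where t: "t = Nd a ts" by (cases t)
  have i: "i < length ts" and u: "is_pos u (ts ! i)" using Cons.prems t by auto
  from Cons.prems(2) t i consider "In x = tag_ilab v a"
    | "In x \<in> labels (replace_at u (annotate (v @ [i]) (ts ! i)) (Nd (LA p) []))"
    | j where "j < length ts" "j \<noteq> i" "In x \<in> labels (annotate (v @ [j]) (ts ! j))"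
    by (fastforce dest: mem_set_list_update)
  then show ?case
  proof cases
    case 1 then show ?thesis by (cases a) auto
  next
    case 2 then show ?thesis using Cons.IH[OF u, of "v @ [i]"] by simp
  next
    case 3 then show ?thesis using tags_annotate by fastforce
  qed
qed simp

lemma hrun_annotate: "hrun (tagged_mttr M) (annotate v t) = hrun M t"
proof (induction v t rule: annotate.induct)
  case (1 v a ts)
  have "map (hrun (tagged_mttr M)) (map (\<lambda>i. annotate (v @ [i]) (ts ! i)) [0..<length ts]) =
      map (hrun M) ts"
    using 1 by (auto intro: nth_equalityI)
  then show ?case by (cases a) simp_all
qed

abbreviation erase_in :: "('s \<times> nat list,'p) ilab rtree \<Rightarrow> ('s,'p) ilab rtree" where
  "erase_in \<equiv> map_rtree (map_ilab fst (\<lambda>p. p))"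

abbreviation erase_out :: "('q,'p,'d \<times> nat list) olab rtree \<Rightarrow> ('q,'p,'d) olab rtree" where
  "erase_out \<equiv> map_rtree (map_olab (\<lambda>q. q) (\<lambda>p. p) fst)"

lemma erase_annotate: "erase_in (annotate v t) = t"
proof (induction v t rule: annotate.induct)
  case (1 v a ts)
  have "map erase_in (map (\<lambda>i. annotate (v @ [i]) (ts ! i)) [0..<length ts]) = ts"
    using 1 by (intro nth_equalityI) simp_all
  then show ?case by (cases a) simp_all
qed

lemma in_tree_erase: "in_tree (tagged_mttr M) w s \<Longrightarrow> in_tree M w (erase_in s)"
proof (induction s)
  case (Nd a ts) then show ?case by (cases a) auto
qed

lemma hrun_erase: "hrun M (erase_in s) = hrun (tagged_mttr M) s"
proof (induction s)
  case (Nd a ts) then show ?case by (cases a) (auto intro!: arg_cong[where f = "la M _"])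
qed

lemma evrhs_erase:
  assumes "wf_rhs M k m r" "length F = k" "length F' = k"
    and "\<forall>i<k. \<forall>q\<in>states M. wf_out M (rkQ M q) ((F' ! i) q) \<and> (F ! i) q = erase_out ((F' ! i) q)"
  shows "evrhs F r = erase_out (evrhs F' (tag_rhs v r))"
  using assms
proof (induction r)
  case (Nd a ts)
  show ?case
  proof (cases a)
    case (Call q i)
    have wf: "wf_out M (rkQ M q) ((F' ! (i - 1)) q)"
      and F: "(F ! (i - 1)) q = erase_out ((F' ! (i - 1)) q)"
      using Nd.prems Call by auto
    have "erase_out (evrhs F' (tag_rhs v (Nd a ts))) =
        erase_out (osubst (map (evrhs F' \<circ> tag_rhs v) ts) ((F' ! (i - 1)) q))"
      using Call by (simp add: tag_rhs_Nd)
    also have "\<dots> = osubst (map erase_out (map (evrhs F' \<circ> tag_rhs v) ts)) (erase_out ((F' ! (i - 1)) q))"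
      by (rule osubst_map_rtree[OF wf]) (use Nd.prems Call in simp)
    also have "map erase_out (map (evrhs F' \<circ> tag_rhs v) ts) = map (evrhs F) ts"
      using Nd Call by auto
    finally show ?thesis using Call F by simp
  qed (use Nd in \<open>auto simp: tag_rhs_Nd\<close>)
qed

lemma Mev_erase:
  assumes "wf_rules M" "in_tree (tagged_mttr M) True s" "q \<in> states M"
  shows "Mev M (erase_in s) q = erase_out (Mev (tagged_mttr M) s q)"
  using assms(2,3)
proof (induction s arbitrary: q)
  case (Nd a ts)
  show ?case
  proof (cases a)
    case (In x)
    have "in_tree M True (Nd (In (fst x)) (map erase_in ts))"
      using in_tree_erase[OF Nd.prems(1)] In by simp
    from wf_rhs_rule[OF assms(1) this Nd.prems(2)]
    have wf: "wf_rhs M (length ts) (rkQ M q) (rules M q (fst x) (map (hrun (tagged_mttr M)) ts))"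
      by (simp add: hrun_erase comp_def)
    have "\<forall>i<length ts. \<forall>q\<in>states M. wf_out M (rkQ M q) ((map (Mev (tagged_mttr M)) ts ! i) q) \<and>
       (map (Mev M) (map erase_in ts) ! i) q = erase_out ((map (Mev (tagged_mttr M)) ts ! i) q)"
    proof (intro allI impI ballI conjI)
      fix i q assume i: "i < length ts" and q: "q \<in> states M"
      have ti: "in_tree (tagged_mttr M) True (ts ! i)" using Nd.prems(1) In i by auto
      show "wf_out M (rkQ M q) ((map (Mev (tagged_mttr M)) ts ! i) q)"
        using wf_out_Mev[OF wf_rules_tagged_mttr[OF assms(1)] ti] q i by simp
      show "(map (Mev M) (map erase_in ts) ! i) q = erase_out ((map (Mev (tagged_mttr M)) ts ! i) q)"
        using Nd.IH[OF nth_mem[OF i] ti q] i by simp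
    qed
    from evrhs_erase[OF wf _ _ this, of "snd x"]
    show ?thesis using In by (simp add: hrun_erase comp_def)
  qed simp
qed

fun tag_of :: "('q,'p,'d \<times> nat list) olab \<Rightarrow> nat list option" where
  "tag_of (ODelta d) = Some (snd d)"
| "tag_of _ = None"

definition tag_count :: "nat list \<Rightarrow> ('q,'p,'d \<times> nat list) olab list \<Rightarrow> nat" where
  "tag_count u \<pi> = count_list (map tag_of \<pi>) (Some u)"

lemma tag_count_Cons: "tag_count u (a # \<pi>) = (if tag_of a = Some u then 1 else 0) + tag_count u \<pi>"
  by (simp add: tag_count_def)

lemma tag_count_append: "tag_count u (\<pi> @ \<rho>) = tag_count u \<pi> + tag_count u \<rho>"
  by (simp add: tag_count_def)

lemma tag_count_eq_0: "\<forall>a\<in>labels t. tag_of a \<noteq> Some u \<Longrightarrow> \<pi> \<in> paths t \<Longrightarrow> tag_count u \<pi> = 0"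
  using set_path_subset_labels[of \<pi> t] unfolding tag_count_def by (auto simp: count_list_0_iff)

lemma length_eq_sum_tag_count:
  assumes "finite U" "\<forall>a\<in>set \<pi>. \<exists>u\<in>U. tag_of a = Some u"
  shows "length \<pi> = (\<Sum>u\<in>U. tag_count u \<pi>)"
proof -
  have "set (map tag_of \<pi>) \<subseteq> Some ` U" using assms(2) by auto
  from sum_count_set[OF this finite_imageI[OF assms(1)]]
  show ?thesis by (simp add: sum.reindex tag_count_def)
qed

lemma nesting_map_olab: "nesting (map (map_olab f g h) \<pi>) = nesting \<pi>"
proof -
  have "is_state_lab (map_olab f g h a) = is_state_lab a" for a by (cases a) auto
  then show ?thesis unfolding nesting_def by (induction \<pi>) auto
qed

lemma tag_of_Mev_tagged:
  assumes "wf_rules M" "in_tree (tagged_mttr M) True s" "q \<in> states M"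
    and "a \<in> labels (Mev (tagged_mttr M) s q)" "tag_of a = Some w"
  shows "\<exists>x. In x \<in> labels s \<and> snd x = w"
  using assms(2-5)
proof (induction s arbitrary: q a)
  case (Nd b ts)
  show ?case
  proof (cases b)
    case (In x)
    let ?M = "tagged_mttr M"
    have wf: "wf_rhs ?M (length ts) (rkQ M q) (rules ?M q x (map (hrun ?M) ts))"
      using wf_rhs_rule[OF wf_rules_tagged_mttr[OF assms(1)]] Nd.prems In by simp
    have "\<forall>i<length ts. \<forall>q\<in>states M. wf_out M (rkQ M q) ((map (Mev ?M) ts ! i) q)"
      using Nd.prems In wf_out_Mev[OF wf_rules_tagged_mttr[OF assms(1)]] by fastforce
    with labels_evrhs[OF wf, of "map (Mev ?M) ts" a] Nd.prems
    consider d where "Out d \<in> labels (rules ?M q x (map (hrun ?M) ts))" "a = ODelta d"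
      | j where "a = OPar j"
      | i q' where "i < length ts" "q' \<in> states M" "a \<in> labels (Mev ?M (ts ! i) q')"
      using In by auto
    then show ?thesis
    proof cases
      case 1
      then have "snd x = w" using Out_labels_tag_rhs 1 Nd.prems(4) by fastforce
      then show ?thesis using In by (intro exI[of _ x]) simp
    next
      case 2
      then show ?thesis using Nd.prems by simp
    next
      case 3
      have "in_tree (tagged_mttr M) True (ts ! i)" using 3(1) Nd.prems(1) In by auto
      then obtain y where "In y \<in> labels (ts ! i)" "snd y = w"
        using Nd.IH[OF nth_mem[OF 3(1)] _ 3(2,3) Nd.prems(4)] by blast
      then show ?thesis using nth_mem[OF 3(1)] In by (intro exI[of _ y]) auto
    qed
  qed (use Nd.prems in auto)
qed

lemma tag_count_evrhs_le:
  assumes "wf_rhs M k m r" "length F = k"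
    and "\<forall>i<k. \<forall>q\<in>states M. wf_out M (rkQ M q) ((F ! i) q)"
    and "\<forall>i<k. \<forall>q\<in>states M. \<forall>a\<in>labels ((F ! i) q). tag_of a \<noteq> Some u"
    and "\<pi> \<in> paths (evrhs F r)"
  shows "tag_count u \<pi> \<le> theight r"
  using assms
proof (induction r arbitrary: \<pi>)
  case (Nd b ts)
  show ?case
  proof (cases b)
    case (Out d)
    show ?thesis
    proof (cases "ts = []")
      case True then show ?thesis using Nd.prems Out by (simp add: tag_count_def)
    next
      case False
      then obtain t \<pi>' where t: "t \<in> set ts" "\<pi>' \<in> paths (evrhs F t)" "\<pi> = ODelta d # \<pi>'"
        using Nd.prems Out by auto
      have "tag_count u \<pi>' \<le> theight t" using Nd.IH[OF t(1)] Nd.prems Out t by auto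
      then show ?thesis using theight_child_less[OF t(1), of b] t(3) by (simp add: tag_count_Cons)
    qed
  next
    case (Call q i)
    let ?J = "(F ! (i - 1)) q"
    have q: "q \<in> states M" and i: "1 \<le> i" "i \<le> k" and l: "length ts = rkQ M q"
      using Nd.prems Call by auto
    have "i - 1 < k" using i by simp
    then have wf: "wf_out M (rkQ M q) ?J" and no_u: "\<forall>a\<in>labels ?J. tag_of a \<noteq> Some u"
      using Nd.prems(3,4) q by blast+
    have len: "length (map (evrhs F) ts) = rkQ M q" using l by simp
    have "\<pi> \<in> paths (osubst (map (evrhs F) ts) ?J)" using Nd.prems Call by simp
    from paths_osubst[OF wf len this]
    show ?thesis
    proof (elim disjE exE conjE)
      assume "\<pi> \<in> paths ?J" then show ?thesis using tag_count_eq_0[OF no_u] by simp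
    next
      fix \<rho> j \<sigma> assume j: "\<rho> @ [OPar j] \<in> paths ?J" "1 \<le> j" "j \<le> rkQ M q"
        "\<sigma> \<in> paths (map (evrhs F) ts ! (j - 1))" "\<pi> = \<rho> @ \<sigma>"
      have "tag_count u \<rho> = 0" using tag_count_eq_0[OF no_u j(1)] by (simp add: tag_count_append)
      moreover have t: "ts ! (j - 1) \<in> set ts" using j l by simp
      moreover have "tag_count u \<sigma> \<le> theight (ts ! (j - 1))"
        using Nd.IH[OF t] Nd.prems Call j l by auto
      ultimately show ?thesis
        using theight_child_less[OF t, of b] j(5) by (simp add: tag_count_append)
    qed
  next
    case (Par j) then show ?thesis using Nd.prems by (simp add: tag_count_def)
  qed
qed

lemma tag_count_subst_states_le:
  assumes "wf_otree S rk m t" "\<forall>q\<in>S. wf_otree S rk (rk q) (I q) \<and> (\<forall>\<pi>\<in>paths (I q). tag_count u \<pi> \<le> K)"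
    and "\<forall>a\<in>labels t. tag_of a \<noteq> Some u" "\<pi> \<in> paths (subst_states I t)"
  shows "\<exists>\<pi>'\<in>paths t. tag_count u \<pi> \<le> K * nesting \<pi>'"
  using assms
proof (induction t arbitrary: \<pi>)
  case (Nd b ts)
  show ?case
  proof (cases "is_state_lab b")
    case False
    then have st: "subst_states I (Nd b ts) = Nd b (map (subst_states I) ts)" by (cases b) auto
    show ?thesis
    proof (cases "ts = []")
      case True
      then show ?thesis using Nd.prems st by (auto simp: tag_count_def)
    next
      case ne: False
      then obtain t \<pi>1 where t: "t \<in> set ts" "\<pi>1 \<in> paths (subst_states I t)" "\<pi> = b # \<pi>1"
        using Nd.prems st by auto
      moreover have "\<forall>a\<in>labels t. tag_of a \<noteq> Some u" using Nd.prems(3) t(1) by auto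
      ultimately obtain \<pi>' where \<pi>': "\<pi>' \<in> paths t" "tag_count u \<pi>1 \<le> K * nesting \<pi>'"
        using Nd.IH[OF t(1) wf_otree_child[OF Nd.prems(1) t(1)] Nd.prems(2)] by blast
      have "tag_of b \<noteq> Some u" using Nd.prems by auto
      with Cons_in_paths_Nd[OF t(1) \<pi>'(1)] show ?thesis
        using \<pi>'(2) t(3) False by (intro bexI[of _ "b # \<pi>'"]) (auto simp: tag_count_Cons nesting_def)
    qed
  next
    case True
    then obtain q p where b: "b = OState q p" by (cases b) auto
    have q: "q \<in> S" and l: "length (map (subst_states I) ts) = rk q" using Nd.prems b by auto
    have wf: "wf_otree S rk (rk q) (I q)" and K: "\<forall>\<pi>\<in>paths (I q). tag_count u \<pi> \<le> K"
      using Nd.prems q by auto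
    obtain \<pi>0 where \<pi>0: "\<pi>0 \<in> paths (Nd b ts)" using paths_nonempty by blast
    from paths_Nd_Cons[OF this] obtain \<pi>1 where \<pi>1: "\<pi>0 = b # \<pi>1" ..
    have "\<pi> \<in> paths (osubst (map (subst_states I) ts) (I q))" using Nd.prems b by simp
    from paths_osubst[OF wf l this]
    show ?thesis
    proof (elim disjE exE conjE)
      assume "\<pi> \<in> paths (I q)"
      then have "tag_count u \<pi> \<le> K" using K by blast
      also have "K \<le> K * nesting \<pi>0" using b \<pi>1 by (simp add: nesting_def)
      finally show ?thesis using \<pi>0 by blast
    next
      fix \<rho> j \<sigma> assume j: "\<rho> @ [OPar j] \<in> paths (I q)" "1 \<le> j" "j \<le> rk q"
        "\<sigma> \<in> paths (map (subst_states I) ts ! (j - 1))" "\<pi> = \<rho> @ \<sigma>"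
      have \<rho>: "tag_count u \<rho> \<le> K" using K j(1) by (fastforce simp: tag_count_append)
      have jl: "j - 1 < length ts" using j l by simp
      then have t: "ts ! (j - 1) \<in> set ts" by simp
      have "\<forall>a\<in>labels (ts ! (j - 1)). tag_of a \<noteq> Some u" using Nd.prems(3) t by auto
      moreover have "\<sigma> \<in> paths (subst_states I (ts ! (j - 1)))" using j(4) jl by simp
      ultimately obtain \<pi>' where \<pi>': "\<pi>' \<in> paths (ts ! (j - 1))" "tag_count u \<sigma> \<le> K * nesting \<pi>'"
        using Nd.IH[OF t wf_otree_child[OF Nd.prems(1) t] Nd.prems(2)] by blast
      from Cons_in_paths_Nd[OF t \<pi>'(1)]
      show ?thesis
        using \<pi>' \<rho> j(5) b by (intro bexI[of _ "b # \<pi>'"]) (auto simp: tag_count_append nesting_def)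
    qed
  qed
qed

definition rhs_height_bound :: "('q,'p,'s,'d) mttr \<Rightarrow> nat \<Rightarrow> bool" where
  "rhs_height_bound M R \<longleftrightarrow> (\<forall>q\<in>states M. \<forall>\<sigma>\<in>inp M. \<forall>ps.
     length ps = rkI M \<sigma> \<and> set ps \<subseteq> lastates M \<longrightarrow> theight (rules M q \<sigma> ps) \<le> R)"

lemma wf_mttr_rhs_height_bound: "wf_mttr M \<Longrightarrow> \<exists>R. rhs_height_bound M R"
proof -
  assume wf: "wf_mttr M"
  let ?H = "\<Union>q\<in>states M. \<Union>\<sigma>\<in>inp M.
    (\<lambda>ps. theight (rules M q \<sigma> ps)) ` {ps. set ps \<subseteq> lastates M \<and> length ps = rkI M \<sigma>}"
  have fin: "finite (states M)" "finite (inp M)" "finite (lastates M)"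
    using wf unfolding wf_mttr_def by simp_all
  then have "finite {ps. set ps \<subseteq> lastates M \<and> length ps = n}" for n
    using finite_lists_length_eq by blast
  then have "finite ?H"
    using fin by (intro finite_UN_I finite_imageI) auto
  then obtain R where R: "\<forall>n\<in>?H. n \<le> R" unfolding finite_nat_set_iff_bounded_le ..
  show ?thesis unfolding rhs_height_bound_def
  proof (intro exI ballI allI impI)
    fix q \<sigma> ps assume "q \<in> states M" "\<sigma> \<in> inp M" "length ps = rkI M \<sigma> \<and> set ps \<subseteq> lastates M"
    then have "theight (rules M q \<sigma> ps) \<in> ?H" by blast
    then show "theight (rules M q \<sigma> ps) \<le> R" using R by blast
  qed
qed

text \<open>In \<open>annotate u s\<close> only the root carries the tag u, so all symbols tagged u come from the
  right-hand side applied at the root.\<close>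
lemma tag_count_Mev_annotate_le:
  assumes wf: "wf_rules M" and R: "rhs_height_bound M R"
    and s: "in_tree M False s" and q: "q \<in> states M"
    and \<pi>: "\<pi> \<in> paths (Mev (tagged_mttr M) (annotate u s) q)"
  shows "tag_count u \<pi> \<le> R"
proof -
  obtain a ts where "s = Nd a ts" by (cases s)
  with s obtain \<sigma> where s_eq: "s = Nd (In \<sigma>) ts" by (cases a) auto
  let ?M = "tagged_mttr M"
  define ats where "ats = map (\<lambda>i. annotate (u @ [i]) (ts ! i)) [0..<length ts]"
  define ps where "ps = map (hrun ?M) ats"
  have wf': "wf_rules ?M" using wf_rules_tagged_mttr[OF wf] .
  have s': "in_tree ?M False (Nd (In (\<sigma>, u)) ats)"
    using in_tree_annotate[OF s, of u] s_eq by (simp add: ats_def)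
  then have ats: "\<forall>t\<in>set ats. in_tree ?M True t" by (auto intro: in_tree_with_LA)
  have no_u: "\<forall>i<length ats. \<forall>q\<in>states ?M. \<forall>a\<in>labels ((map (Mev ?M) ats ! i) q). tag_of a \<noteq> Some u"
  proof (intro allI impI ballI notI)
    fix i q' a assume i: "i < length ats" and "q' \<in> states ?M"
    then have q': "q' \<in> states M" by simp
    assume "a \<in> labels ((map (Mev ?M) ats ! i) q')" and tag: "tag_of a = Some u"
    then have "a \<in> labels (Mev ?M (ats ! i) q')" using i by simp
    moreover have "in_tree ?M True (ats ! i)" using ats i by simp
    ultimately obtain x where "In x \<in> labels (ats ! i)" "snd x = u"
      using tag_of_Mev_tagged[OF wf _ q' _ tag] by blast
    moreover have "ats ! i = annotate (u @ [i]) (ts ! i)" using i by (simp add: ats_def)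
    ultimately show False using tags_annotate by fastforce
  qed
  have wf_ats: "\<forall>i<length ats. \<forall>q\<in>states ?M. wf_out ?M (rkQ ?M q) ((map (Mev ?M) ats ! i) q)"
    using ats wf_out_Mev[OF wf'] by fastforce
  have evr: "\<pi> \<in> paths (evrhs (map (Mev ?M) ats) (tag_rhs u (rules M q \<sigma> ps)))"
    using \<pi> s_eq by (simp add: ats_def ps_def)
  have wfr: "wf_rhs ?M (length ats) (rkQ M q) (tag_rhs u (rules M q \<sigma> ps))"
    using wf_rhs_rule[OF wf' s'] q by (simp add: ps_def)
  have "tag_count u \<pi> \<le> theight (tag_rhs u (rules M q \<sigma> ps))"
    using tag_count_evrhs_le[OF wfr _ wf_ats no_u evr] by simp
  also have "\<dots> \<le> R"
  proof -
    have "set ps \<subseteq> lastates M" using hrun_in_lastates[OF wf'] ats by (auto simp: ps_def)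
    moreover have "length ps = rkI M \<sigma>" "\<sigma> \<in> inp M" using s s_eq by (simp_all add: ps_def ats_def)
    ultimately show ?thesis using R q unfolding rhs_height_bound_def by (simp add: theight_tag_rhs)
  qed
  finally show ?thesis .
qed

lemma labels_Mev_annotate:
  assumes wf: "wf_rules M" and q0: "init M \<in> states M" "rkQ M (init M) = 0"
    and t: "in_tree M False t" and a: "a \<in> labels (Mev (tagged_mttr M) (annotate [] t) (init M))"
  shows "\<exists>u. is_pos u t \<and> tag_of a = Some u"
proof -
  let ?M = "tagged_mttr M"
  have wf': "wf_rules ?M" using wf_rules_tagged_mttr[OF wf] .
  have ta: "in_tree ?M False (annotate [] t)" using in_tree_annotate[OF t] .
  have "\<not> is_state_lab a" using Mev_no_state_labels[OF wf' ta _ a] q0 by simp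
  moreover have "a \<noteq> Dollar \<and> (\<forall>j. a \<noteq> OPar j)"
    using wf_otree_labels[OF wf_out_Mev[OF wf' in_tree_with_LA[OF ta]] a] q0 by auto
  ultimately obtain d where d: "a = ODelta d" by (cases a) auto
  then obtain x where "In x \<in> labels (annotate [] t)" "snd x = snd d"
    using tag_of_Mev_tagged[OF wf in_tree_with_LA[OF ta] q0(1) a] by auto
  then show ?thesis using tags_annotate d by fastforce
qed

lemma theight_Mout_le_tag_count:
  assumes wf: "wf_rules M" and q0: "init M \<in> states M" "rkQ M (init M) = 0"
    and t: "in_tree M False t"
    and K: "\<And>u \<pi>. is_pos u t \<Longrightarrow> \<pi> \<in> paths (Mev (tagged_mttr M) (annotate [] t) (init M)) \<Longrightarrow>
      tag_count u \<pi> \<le> K"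
  shows "theight (Mout M t) \<le> K * tsize t"
proof -
  let ?T = "Mev (tagged_mttr M) (annotate [] t) (init M)"
  have "Mout M t = erase_out ?T"
    using Mev_erase[OF wf in_tree_with_LA[OF in_tree_annotate[OF t]] q0(1)]
    by (simp add: Mout_def Mq_def erase_annotate)
  moreover have "theight ?T \<le> K * tsize t"
  proof (rule theight_le_if_paths_le)
    fix \<pi> assume \<pi>: "\<pi> \<in> paths ?T"
    have "\<forall>a\<in>set \<pi>. \<exists>u\<in>positions t. tag_of a = Some u"
      using labels_Mev_annotate[OF wf q0 t] set_path_subset_labels[OF \<pi>]
      by (fastforce simp: positions_def)
    then have "length \<pi> = (\<Sum>u\<in>positions t. tag_count u \<pi>)"
      by (rule length_eq_sum_tag_count[OF finite_positions])
    also have "\<dots> \<le> (\<Sum>u\<in>positions t. K)"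
      using K \<pi> by (intro sum_mono) (simp add: positions_def)
    also have "\<dots> = card (positions t) * K" by simp
    also have "\<dots> \<le> K * tsize t"
      using card_positions_le_tsize[of t] by (simp add: mult.commute)
    finally show "length \<pi> \<le> K * tsize t" .
  qed
  ultimately show ?thesis by (simp add: theight_map_rtree)
qed

lemma nesting_Mev_tagged_replace_at_le:
  fixes M :: "('q,'p,'s,'d) mttr"
  assumes wf: "wf_rules M" and q0: "init M \<in> states M"
    and b: "\<forall>t'. in_tree M True t' \<and> count_nodes is_LA t' = 1 \<longrightarrow>
      (\<forall>\<pi>\<in>paths (Mout M t'). nesting \<pi> \<le> b)"
    and t: "in_tree M False t" and u: "is_pos u t" and p: "p \<in> lastates M"
    and \<rho>: "\<rho> \<in> paths (Mev (tagged_mttr M) (replace_at u (annotate [] t) (Nd (LA p) [])) (init M))"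
  shows "nesting \<rho> \<le> b"
proof -
  define C :: "('s \<times> nat list,'p) ilab rtree" where "C = replace_at u (annotate [] t) (Nd (LA p) [])"
  define t' where "t' = replace_at u t (Nd (LA p) [])"
  have u': "is_pos u (annotate [] t)" using u by (simp add: is_pos_annotate)
  have C: "in_tree (tagged_mttr M) True C"
    using in_tree_replace_at[OF in_tree_with_LA[OF in_tree_annotate[OF t]] u'] p by (simp add: C_def)
  have "erase_in C = t'"
    using map_rtree_replace_at[OF u', of "map_ilab fst (\<lambda>p. p)"]
    by (simp add: C_def t'_def erase_annotate)
  then have "Mout M t' = erase_out (Mev (tagged_mttr M) C (init M))"
    using Mev_erase[OF wf C q0] by (simp add: Mout_def Mq_def)
  then have "map (map_olab (\<lambda>q. q) (\<lambda>p. p) fst) \<rho> \<in> paths (Mout M t')"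
    using \<rho> by (simp add: C_def paths_map_rtree)
  moreover have "in_tree M True t'" "count_nodes is_LA t' = 1"
    using in_tree_replace_at[OF in_tree_with_LA[OF t] u] p count_LA_replace_at[OF t u]
    by (simp_all add: t'_def)
  ultimately have "nesting (map (map_olab (\<lambda>q. q) (\<lambda>p. p) fst) \<rho>) \<le> b" using b by blast
  then show ?thesis by (simp only: nesting_map_olab)
qed

text \<open>Symbols tagged u on a path of the tagged output lie in at most b copies of some
  \<open>\<hat>M\<^sub>q(t/u)\<close>, with at most R of them in each copy.\<close>
lemma tag_count_le_rhs_height_nesting:
  fixes M :: "('q,'p,'s,'d) mttr"
  assumes wf: "wf_mttr M" and R: "rhs_height_bound M R"
    and b: "\<forall>t'. in_tree M True t' \<and> count_nodes is_LA t' = 1 \<longrightarrow>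
      (\<forall>\<pi>\<in>paths (Mout M t'). nesting \<pi> \<le> b)"
    and t: "in_tree M False t" and u: "is_pos u t"
    and \<pi>: "\<pi> \<in> paths (Mev (tagged_mttr M) (annotate [] t) (init M))"
  shows "tag_count u \<pi> \<le> R * b"
proof -
  let ?M = "tagged_mttr M"
  let ?q0 = "init M"
  define ta where "ta = annotate [] t"
  define p where "p = hrun M (subtree_at u t)"
  define C :: "('s \<times> nat list,'p) ilab rtree" where "C = replace_at u ta (Nd (LA p) [])"
  define I where "I = Mev ?M (subtree_at u ta)"
  have wf0: "wf_rules M" using wf_mttr_imp_wf_rules[OF wf] .
  have wf': "wf_rules ?M" using wf_rules_tagged_mttr[OF wf0] .
  have q0: "?q0 \<in> states M" "rkQ M ?q0 = 0" using wf unfolding wf_mttr_def by auto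
  have ta: "in_tree ?M False ta" "is_pos u ta"
    using in_tree_annotate[OF t] u by (simp_all add: ta_def is_pos_annotate)
  have sub: "subtree_at u ta = annotate u (subtree_at u t)"
    using subtree_at_annotate[OF u] by (simp add: ta_def)
  have t_u: "in_tree M False (subtree_at u t)" using in_tree_subtree_at[OF t u] .
  have "p \<in> lastates M" using hrun_in_lastates[OF wf0 t_u] by (simp add: p_def)
  then have C: "in_tree ?M True C"
    using in_tree_replace_at[OF in_tree_with_LA[OF ta(1)] ta(2)] by (simp add: C_def)
  have "Mev ?M ta ?q0 = subst_states I (Mev ?M C ?q0)"
    using Mev_decompose[OF wf' ta(2,1)] q0 by (simp add: C_def I_def p_def sub hrun_annotate)
  then have \<pi>': "\<pi> \<in> paths (subst_states I (Mev ?M C ?q0))" using \<pi> by (simp add: ta_def)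
  have I_bound: "\<forall>q\<in>states M. wf_out M (rkQ M q) (I q) \<and> (\<forall>\<pi>\<in>paths (I q). tag_count u \<pi> \<le> R)"
    using wf_out_Mev[OF wf' in_tree_with_LA[OF in_tree_subtree_at[OF ta]]]
      tag_count_Mev_annotate_le[OF wf0 R t_u] by (simp add: I_def sub)
  have no_u: "\<forall>a\<in>labels (Mev ?M C ?q0). tag_of a \<noteq> Some u"
  proof (intro ballI notI)
    fix a assume "a \<in> labels (Mev ?M C ?q0)" "tag_of a = Some u"
    then obtain x where "In x \<in> labels C" "snd x = u" using tag_of_Mev_tagged[OF wf0 C q0(1)] by blast
    then show False using tags_replace_at_annotate[OF u, of x "[]" p] by (simp add: C_def ta_def)
  qed
  have "wf_out M 0 (Mev ?M C ?q0)" using wf_out_Mev[OF wf' C, of ?q0] q0 by simp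
  from tag_count_subst_states_le[OF this I_bound no_u \<pi>']
  obtain \<rho> where \<rho>: "\<rho> \<in> paths (Mev ?M C ?q0)" "tag_count u \<pi> \<le> R * nesting \<rho>" ..
  have "nesting \<rho> \<le> b"
    using nesting_Mev_tagged_replace_at_le[OF wf0 q0(1) b t u \<open>p \<in> lastates M\<close>] \<rho>(1)
    by (simp add: C_def ta_def)
  then show ?thesis using \<rho>(2) mult_le_mono2[of "nesting \<rho>" b R] by linarith
qed

theorem mainTheorem4:
  fixes M :: "('q,'p,'s,'d) mttr"
  assumes "wf_mttr M"
    and "depth_proper M"
    and "finite_nesting M"
  shows "LSHI M"
proof -
  obtain R where R: "rhs_height_bound M R" using wf_mttr_rhs_height_bound[OF assms(1)] ..
  obtain b where b: "\<forall>t'. in_tree M True t' \<and> count_nodes is_LA t' = 1 \<longrightarrow>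
      (\<forall>\<pi>\<in>paths (Mout M t'). nesting \<pi> \<le> b)"
    using assms(3) unfolding finite_nesting_def by blast
  have q0: "init M \<in> states M" "rkQ M (init M) = 0" using assms(1) unfolding wf_mttr_def by auto
  have "theight (Mout M t) \<le> (R * b) * tsize t" if t: "in_tree M False t" for t
    using theight_Mout_le_tag_count[OF wf_mttr_imp_wf_rules[OF assms(1)] q0 t]
      tag_count_le_rhs_height_nesting[OF assms(1) R b t] by blast
  then show ?thesis unfolding LSHI_def by blast
qed

end
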